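(* Let $d>1$ be a square-free integer, let $K=\mathbb{Q}(\sqrt{-d})$, and let $\ell$ be an odd prime. Let $p_1,\dots,p_M$ be $M$ distinct rational primes such that for each $j$: $p_j\nmid 2d$, $p_j$ splits in $K$, and $p_j<\tfrac14 d^{1/(2\ell)}$. Write $p_j\mathcal{O}_K=\mathfrak{p}_j\mathfrak{p}_j^{\sigma}$, where $\sigma$ is the nontrivial automorphism of $K$. Then the ideal classes $[\mathfrak{p}_1],\dots,[\mathfrak{p}_M]$ lie in pairwise distinct cosets of the subgroup $\mathrm{Cl}_K[\ell]$ of $\mathrm{Cl}_K$. Consequently $$|\mathrm{Cl}_K[\ell]|\le \frac{|\mathrm{Cl}_K|}{M}.$$
   Context: For a number field $K$, $\mathrm{Cl}_K$ denotes its ideal class group (fractional ideals modulo principal ideals), a finite abelian group, and for an integer $\ell\ge 2$, $\mathrm{Cl}_K[\ell]=\{[\mathfrak{a}]\in\mathrm{Cl}_K:[\mathfrak{a}]^\ell=\mathrm{Id}\}$ is its $\ell$-torsion subgroup. $\mathcal{O}_K$ is the ring of integers of $K$. *)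

theory Defs
  imports Complex_Main "HOL-Algebra.Coset" "HOL-Computational_Algebra.Squarefree"
begin

text \<open>The ring of integers is Z[omega] with omega = (1 + sqrt(-d))/2 if
-d = 1 mod 4 (i.e. d mod 4 = 3), and omega = sqrt(-d) otherwise.\<close>

definition omega :: "int \<Rightarrow> complex" where
  "omega d = (if d mod 4 = 3 then (1 + \<i> * of_real (sqrt (real_of_int d))) / 2
              else \<i> * of_real (sqrt (real_of_int d)))"

definition OK :: "int \<Rightarrow> complex set" where
  "OK d = {of_int a + of_int b * omega d | a b. True}"

definition is_ideal :: "int \<Rightarrow> complex set \<Rightarrow> bool" where
  "is_ideal d I \<longleftrightarrow> I \<subseteq> OK d \<and> 0 \<in> I \<and> (\<forall>x\<in>I. \<forall>y\<in>I. x + y \<in> I)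
      \<and> (\<forall>r\<in>OK d. \<forall>x\<in>I. r * x \<in> I)"

definition nz_ideal :: "int \<Rightarrow> complex set \<Rightarrow> bool" where
  "nz_ideal d I \<longleftrightarrow> is_ideal d I \<and> I \<noteq> {0}"

definition ideal_mult :: "int \<Rightarrow> complex set \<Rightarrow> complex set \<Rightarrow> complex set" where
  "ideal_mult d I J = \<Inter>{H. is_ideal d H \<and> {x * y | x y. x \<in> I \<and> y \<in> J} \<subseteq> H}"

definition principal_ideal :: "int \<Rightarrow> complex \<Rightarrow> complex set" where
  "principal_ideal d \<alpha> = {r * \<alpha> | r. r \<in> OK d}"

definition prime_ideal :: "int \<Rightarrow> complex set \<Rightarrow> bool" where
  "prime_ideal d P \<longleftrightarrow> nz_ideal d P \<and> P \<noteq> OK d \<and>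
      (\<forall>x\<in>OK d. \<forall>y\<in>OK d. x * y \<in> P \<longrightarrow> x \<in> P \<or> y \<in> P)"

text \<open>Image of an ideal under the nontrivial automorphism sigma (complex conjugation).\<close>
definition conj_ideal :: "complex set \<Rightarrow> complex set" where
  "conj_ideal I = cnj ` I"

text \<open>Equality of ideal classes: I and J differ by a principal fractional ideal,
i.e. alpha I = beta J for nonzero alpha, beta in O_K.\<close>
definition ideal_equiv :: "int \<Rightarrow> complex set \<Rightarrow> complex set \<Rightarrow> bool" where
  "ideal_equiv d I J \<longleftrightarrow> (\<exists>\<alpha> \<beta>. \<alpha> \<in> OK d \<and> \<beta> \<in> OK d \<and> \<alpha> \<noteq> 0 \<and> \<beta> \<noteq> 0 \<and>
       (\<lambda>x. \<alpha> * x) ` I = (\<lambda>x. \<beta> * x) ` J)"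

definition ideal_class :: "int \<Rightarrow> complex set \<Rightarrow> complex set set" where
  "ideal_class d I = {J. nz_ideal d J \<and> ideal_equiv d I J}"

definition class_group :: "int \<Rightarrow> complex set set monoid" where
  "class_group d = \<lparr> carrier = ideal_class d ` {I. nz_ideal d I},
     monoid.mult = (\<lambda>X Y. ideal_class d (ideal_mult d (SOME I. I \<in> X) (SOME J. J \<in> Y))),
     monoid.one = ideal_class d (OK d) \<rparr>"

definition torsion :: "int \<Rightarrow> nat \<Rightarrow> complex set set set" where
  "torsion d l = {x \<in> carrier (class_group d). x [^]\<^bsub>class_group d\<^esub> l = \<one>\<^bsub>class_group d\<^esub>}"

end

theory Submission
  imports Defs "HOL-Analysis.Kronecker_Approximation_Theorem"
begin

(* Suppose [p_i] and [p_j] (i \<noteq> j) lie in the same coset of Cl_K[l]. Since [p_j]^-1 = [p_j^\<sigma>],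
   the ideal a = p_i p_j^\<sigma> satisfies a^l = (\<gamma>) for some \<gamma> \<in> O_K. Taking norms, \<gamma> \<gamma>^\<sigma>
   divides (p_i p_j)^l < d/4, whereas every element of O_K outside Z has norm at least d/4;
   hence \<gamma> \<in> Z and (\<gamma>) is \<sigma>-stable. So (a^\<sigma>)^l = a^l \<subseteq> p_i, and primality gives
   p_i^\<sigma> p_j = a^\<sigma> \<subseteq> p_i, i.e. p_i^\<sigma> \<subseteq> p_i or p_j \<subseteq> p_i; the first contradicts
   p_i \<noteq> p_i^\<sigma>, the second the coprimality of p_i and p_j. The bound on |Cl_K[l]| is then
   Lagrange's theorem.
   That Cl_K is a finite group must itself be derived from the definitions: the inverse of
   [a] is [a^\<sigma>] because a a^\<sigma> is generated by a rational integer (by integral closedness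
   of O_K), and every class contains an ideal containing a fixed integer N!, where a
   Dirichlet approximation with denominators at most N bounds the remainders. *)


section \<open>Elementary number theory\<close>

lemma square_mod_4: "(x::int)^2 mod 4 = (if even x then 0 else 1)"
proof (cases "even x")
  case True
  then obtain k where "x = 2 * k" by blast
  then show ?thesis by (simp add: power2_eq_square)
next
  case False
  then obtain k where "x = 2 * k + 1" using oddE by blast
  then have "x^2 = 4 * (k * k + k) + 1" by (simp add: power2_eq_square algebra_simps)
  moreover have "(4 * m + 1) mod 4 = (1::int)" for m by presburger
  ultimately show ?thesis using False by metis
qed

lemma four_dvd_sum_squares_parity:
  fixes x y d :: int
  assumes "4 dvd x^2 + d * y^2"
  shows "4 dvd (if even x then 0 else 1) + d * (if even y then 0 else 1)"
proof -
  have "(x^2 mod 4 + d * (y^2 mod 4)) mod 4 = (x^2 + d * (y^2 mod 4)) mod 4"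
    by (rule mod_add_left_eq)
  also have "\<dots> = (x^2 + d * (y^2 mod 4) mod 4) mod 4"
    by (rule mod_add_right_eq[symmetric])
  also have "\<dots> = (x^2 + d * y^2) mod 4"
    by (simp only: mod_mult_right_eq mod_add_right_eq)
  finally have "4 dvd x^2 mod 4 + d * (y^2 mod 4)"
    using assms by (simp only: dvd_eq_mod_eq_0)
  then show ?thesis by (simp only: square_mod_4)
qed

lemma even_diff_if_four_dvd_sum_squares:
  fixes x y d :: int
  assumes "d mod 4 = 3" "4 dvd x^2 + d * y^2"
  shows "even (x - y)"
proof -
  have "\<not> 4 dvd d" "\<not> 4 dvd (1::int)" using assms(1) by presburger+
  then have "even x \<longleftrightarrow> even y"
    using four_dvd_sum_squares_parity[OF assms(2)] by (auto split: if_splits)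
  then show ?thesis by simp
qed

lemma even_if_four_dvd_sum_squares:
  fixes x y d :: int
  assumes "d mod 4 = 1 \<or> d mod 4 = 2" "4 dvd x^2 + d * y^2"
  shows "even x \<and> even y"
proof -
  have "\<not> 4 dvd d" "\<not> 4 dvd 1 + d" "\<not> 4 dvd (1::int)" using assms(1) by presburger+
  then show ?thesis
    using four_dvd_sum_squares_parity[OF assms(2)] by (auto split: if_splits)
qed

lemma squarefree_not_four_dvd: "squarefree (d::int) \<Longrightarrow> \<not> 4 dvd d"
  using squarefreeD[of d 2] by (auto simp: power2_eq_square)

lemma squarefree_dvd_if_square_dvd:
  fixes d m c :: int
  assumes "squarefree d" "m \<noteq> 0" "m^2 dvd d * c^2"
  shows "m dvd c"
proof -
  define g where "g = gcd m c"
  obtain m' c' where mc: "m = m' * g" "c = c' * g" "coprime m' c'"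
    using gcd_coprime_exists[of m c] assms(2) unfolding g_def by auto
  have "g \<noteq> 0" using assms(2) by (simp add: g_def)
  have "m'^2 * g^2 dvd (d * c'^2) * g^2"
    using assms(3) mc by (simp add: power_mult_distrib ac_simps)
  then have "m'^2 dvd d * c'^2" using \<open>g \<noteq> 0\<close> by simp
  moreover have "coprime (m'^2) (c'^2)" using mc by simp
  ultimately have "m'^2 dvd d" using coprime_dvd_mult_left_iff by blast
  then have "is_unit m'" using assms(1) squarefreeD by blast
  then show ?thesis using mc by (metis mult_dvd_mono unit_imp_dvd dvd_refl)
qed

text \<open>Integrality of a quotient \<open>(A + B \<omega>) / m\<close> from integrality of its trace and norm,
  for \<open>\<omega> = (1 + \<surd>-d) / 2\<close> and for \<open>\<omega> = \<surd>-d\<close> respectively.\<close>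

lemma dvd_if_dvd_trace_norm_3_mod_4:
  fixes d m A B :: int
  assumes "squarefree d" "d mod 4 = 3" "m > 0"
    and "m dvd 2 * A + B" "m^2 dvd A * A + A * B + (1 + d) div 4 * B * B"
  shows "m dvd A \<and> m dvd B"
proof -
  obtain k where k: "A * A + A * B + (1 + d) div 4 * B * B = m^2 * k"
    using assms(5) by blast
  obtain Z where Z: "2 * A + B = m * Z" using assms(4) by blast
  have "4 * ((1 + d) div 4) = 1 + d" using assms(2) by presburger
  then have "(2 * A + B)^2 + d * B^2 = 4 * (A * A + A * B + (1 + d) div 4 * B * B)"
    by (simp add: power2_eq_square algebra_simps)
  then have four_norm: "(2 * A + B)^2 + d * B^2 = m^2 * (4 * k)"
    using k by simp
  moreover have "(2 * A + B)^2 = m^2 * Z^2" by (simp add: Z power_mult_distrib)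
  ultimately have "d * B^2 = m^2 * (4 * k - Z^2)"
    by (simp add: algebra_simps)
  then have "m dvd B" using squarefree_dvd_if_square_dvd[OF assms(1)] assms(3) by simp
  then obtain Y where Y: "B = m * Y" by blast
  have "(2 * A + B)^2 + d * B^2 = m^2 * (Z^2 + d * Y^2)"
    unfolding Z by (simp add: Y power_mult_distrib algebra_simps)
  then have "m^2 * (Z^2 + d * Y^2) = m^2 * (4 * k)" using four_norm by metis
  then have "4 dvd Z^2 + d * Y^2" using assms(3) by (simp del: mult_cancel_left add: dvd_def)
  then have "even (Z - Y)" using even_diff_if_four_dvd_sum_squares assms(2) by blast
  then obtain X where "Z - Y = 2 * X" by blast
  then have "A = m * X" using Z Y by (simp add: algebra_simps)
  then show ?thesis using Y by simp
qed

lemma dvd_if_dvd_trace_norm_not_3_mod_4: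
  fixes d m A B :: int
  assumes "squarefree d" "d mod 4 \<noteq> 3" "m > 0"
    and "m dvd 2 * A" "m^2 dvd A * A + d * B * B"
  shows "m dvd A \<and> m dvd B"
proof -
  have d_mod_4: "d mod 4 = 1 \<or> d mod 4 = 2"
    using assms(2) squarefree_not_four_dvd[OF assms(1)] by presburger
  obtain k where k: "A * A + d * B * B = m^2 * k" using assms(5) by blast
  obtain X where X: "2 * A = m * X" using assms(4) by blast
  have four_norm: "(2 * A)^2 + d * (2 * B)^2 = m^2 * (4 * k)"
    using k by (simp add: power2_eq_square algebra_simps)
  moreover have "(2 * A)^2 = m^2 * X^2" by (simp add: X power_mult_distrib)
  ultimately have "d * (2 * B)^2 = m^2 * (4 * k - X^2)"
    by (simp add: algebra_simps)
  then have "m dvd 2 * B" using squarefree_dvd_if_square_dvd[OF assms(1)] assms(3) by simp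
  then obtain Y where Y: "2 * B = m * Y" by blast
  have "(2 * A)^2 + d * (2 * B)^2 = m^2 * (X^2 + d * Y^2)"
    unfolding X Y by (simp add: power_mult_distrib algebra_simps)
  then have "m^2 * (X^2 + d * Y^2) = m^2 * (4 * k)" using four_norm by metis
  then have "4 dvd X^2 + d * Y^2" using assms(3) by (simp del: mult_cancel_left add: dvd_def)
  then obtain X' Y' where "X = 2 * X'" "Y = 2 * Y'"
    using even_if_four_dvd_sum_squares[OF d_mod_4] by blast
  then show ?thesis using X Y by simp
qed

lemma power_mult_lt_quarter_if_lt_root:
  fixes d :: int and l a b :: nat
  assumes "d > 1" "l > 0"
    and "real a < real_of_int d powr (1 / (2 * real l)) / 4"
    and "real b < real_of_int d powr (1 / (2 * real l)) / 4"
  shows "real ((a * b)^l) < real_of_int d / 4"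
proof -
  define D where "D = real_of_int d powr (1 / (2 * real l))"
  have "D > 0" unfolding D_def using assms(1) by simp
  have "D^(2 * l) = D powr real (2 * l)" by (rule powr_realpow[symmetric, OF \<open>D > 0\<close>])
  also have "\<dots> = real_of_int d" unfolding D_def using assms(1,2) by (simp add: powr_powr)
  finally have D_power: "D^(2 * l) = real_of_int d" .
  have "real a * real b < (D / 4) * (D / 4)"
    using assms(3,4) unfolding D_def[symmetric] by (intro mult_strict_mono) auto
  then have "real ((a * b)^l) < ((D / 4) * (D / 4))^l"
    using assms(2) by (simp add: power_strict_mono)
  also have "\<dots> = D^(2 * l) / 16^l"
    by (simp add: power_mult_distrib power_divide power_mult power2_eq_square[symmetric])
  also have "\<dots> \<le> real_of_int d / 4"
  proof -
    have "(16::real)^1 \<le> 16^l" using assms(2) by (intro power_increasing) auto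
    then show ?thesis unfolding D_power using assms(1) by (intro divide_left_mono) auto
  qed
  finally show ?thesis .
qed


section \<open>Cosets\<close>

lemma (in comm_group) subgroup_nat_pow_eq_one: "subgroup {x \<in> carrier G. x [^] (n::nat) = \<one>} G"
proof (rule subgroupI)
  fix x assume "x \<in> {x \<in> carrier G. x [^] n = \<one>}"
  then show "inv x \<in> {x \<in> carrier G. x [^] n = \<one>}" by (simp add: nat_pow_inv)
next
  fix x y assume "x \<in> {x \<in> carrier G. x [^] n = \<one>}" "y \<in> {x \<in> carrier G. x [^] n = \<one>}"
  then show "x \<otimes> y \<in> {x \<in> carrier G. x [^] n = \<one>}" by (simp add: nat_pow_distrib)
qed auto

lemma (in group) card_subgroup_mult_le:
  assumes "finite (carrier G)" "subgroup H G" "a ` A \<subseteq> carrier G" "inj_on (\<lambda>i. H #> a i) A"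
  shows "card H * card A \<le> card (carrier G)"
proof -
  have "(\<lambda>i. H #> a i) ` A \<subseteq> rcosets H" using assms(3) unfolding RCOSETS_def by blast
  moreover have "finite (rcosets H)"
    using finite_subset[OF rcosets_subset_PowG[OF assms(2)]] assms(1) by simp
  ultimately have "card A \<le> card (rcosets H)" using card_inj_on_le[OF assms(4)] by blast
  then have "card H * card A \<le> card (rcosets H) * card H" by simp
  also have "\<dots> = card (carrier G)" using lagrange[OF assms(2)] by (simp add: order_def)
  finally show ?thesis .
qed


section \<open>The ring of integers\<close>

definition omega_trace :: "int \<Rightarrow> int" where
  "omega_trace d = (if d mod 4 = 3 then 1 else 0)"

definition omega_norm :: "int \<Rightarrow> int" where
  "omega_norm d = (if d mod 4 = 3 then (1 + d) div 4 else d)"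

locale imag_quadratic =
  fixes d :: int
  assumes d_gt_1: "d > 1" and squarefree_d: "squarefree d"
begin

abbreviation "\<omega> \<equiv> omega d"

lemma Re_omega: "Re \<omega> = real_of_int (omega_trace d) / 2"
  by (simp add: omega_def omega_trace_def)

lemma Im_omega: "Im \<omega> = (if d mod 4 = 3 then sqrt d / 2 else sqrt d)"
  by (simp add: omega_def)

lemma Im_omega_pos: "Im \<omega> > 0"
  using d_gt_1 by (simp add: Im_omega)

lemma Im_omega_square_ge: "Im \<omega> * Im \<omega> \<ge> real_of_int d / 4"
  using d_gt_1 by (auto simp: Im_omega)

lemma omega_square: "\<omega> * \<omega> = of_int (omega_trace d) * \<omega> - of_int (omega_norm d)"
proof (cases "d mod 4 = 3")
  case True
  have "4 dvd 1 + d" using True by presburger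
  then have "real_of_int (omega_norm d) = (1 + real_of_int d) / 4"
    using True by (auto simp: omega_norm_def real_of_int_div)
  then show ?thesis
    using True d_gt_1 by (simp add: complex_eq_iff Re_omega Im_omega omega_trace_def field_simps)
next
  case False
  then show ?thesis
    using d_gt_1 by (simp add: complex_eq_iff Re_omega Im_omega omega_norm_def omega_trace_def)
qed

lemma cnj_omega: "cnj \<omega> = of_int (omega_trace d) - \<omega>"
  by (simp add: complex_eq_iff Re_omega Im_omega omega_trace_def)

definition of_coords :: "int \<Rightarrow> int \<Rightarrow> complex" where
  "of_coords a b = of_int a + of_int b * \<omega>"

lemma mem_OK_iff: "z \<in> OK d \<longleftrightarrow> (\<exists>a b. z = of_coords a b)"
  by (auto simp: OK_def of_coords_def)

lemma of_coords_in_OK [intro, simp]: "of_coords a b \<in> OK d"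
  by (auto simp: mem_OK_iff)

lemma Im_of_coords: "Im (of_coords a b) = of_int b * Im \<omega>"
  by (simp add: of_coords_def)

lemma of_coords_add: "of_coords a b + of_coords a' b' = of_coords (a + a') (b + b')"
  by (simp add: of_coords_def algebra_simps)

lemma of_coords_mult:
  "of_coords a b * of_coords a' b' =
     of_coords (a * a' - omega_norm d * b * b') (a * b' + b * a' + omega_trace d * b * b')"
proof -
  have "of_coords a b * of_coords a' b' =
      of_int (a * a') + of_int (a * b' + b * a') * \<omega> + of_int (b * b') * (\<omega> * \<omega>)"
    by (simp add: of_coords_def algebra_simps)
  then show ?thesis by (simp add: omega_square of_coords_def algebra_simps)
qed

lemma cnj_of_coords: "cnj (of_coords a b) = of_coords (a + omega_trace d * b) (- b)"
  by (simp add: of_coords_def cnj_omega algebra_simps)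

lemma of_int_eq_of_coords: "of_int a = of_coords a 0"
  by (simp add: of_coords_def)

lemma add_cnj_of_coords: "of_coords a b + cnj (of_coords a b) = of_int (2 * a + omega_trace d * b)"
  by (simp add: cnj_of_coords of_coords_add of_int_eq_of_coords)

lemma mult_cnj_of_coords:
  "of_coords a b * cnj (of_coords a b) = of_int (a * a + omega_trace d * a * b + omega_norm d * b * b)"
  by (simp add: cnj_of_coords of_coords_mult of_int_eq_of_coords algebra_simps)

lemma OK_add: "x \<in> OK d \<Longrightarrow> y \<in> OK d \<Longrightarrow> x + y \<in> OK d"
  unfolding mem_OK_iff by (metis of_coords_add)

lemma OK_mult: "x \<in> OK d \<Longrightarrow> y \<in> OK d \<Longrightarrow> x * y \<in> OK d"
  unfolding mem_OK_iff by (metis of_coords_mult)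

lemma OK_cnj: "x \<in> OK d \<Longrightarrow> cnj x \<in> OK d"
  unfolding mem_OK_iff by (metis cnj_of_coords)

lemma OK_of_int [intro, simp]: "of_int a \<in> OK d"
  by (simp add: of_int_eq_of_coords)

lemma OK_of_nat [intro, simp]: "of_nat a \<in> OK d"
  using OK_of_int[of "int a"] by simp

lemma OK_0 [intro, simp]: "0 \<in> OK d"
  using OK_of_int[of 0] by simp

lemma OK_1 [intro, simp]: "1 \<in> OK d"
  using OK_of_int[of 1] by simp

lemma OK_real_imp_int: "x \<in> OK d \<Longrightarrow> Im x = 0 \<Longrightarrow> \<exists>a. x = of_int a"
  using Im_omega_pos by (auto simp: mem_OK_iff Im_of_coords of_int_eq_of_coords)

lemma OK_add_cnj_int: "x \<in> OK d \<Longrightarrow> \<exists>k. x + cnj x = of_int k"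
  unfolding mem_OK_iff using add_cnj_of_coords by blast

lemma OK_mult_cnj_nat: "x \<in> OK d \<Longrightarrow> \<exists>n. x * cnj x = of_nat n \<and> (cmod x)^2 = real n"
proof -
  assume "x \<in> OK d"
  then obtain k where k: "x * cnj x = of_int k"
    unfolding mem_OK_iff using mult_cnj_of_coords by blast
  have "real_of_int k = (cmod x)^2"
    using k complex_norm_square[of x] by (metis of_real_eq_iff of_real_of_int_eq)
  then have "0 \<le> k" by (metis of_int_0_le_iff zero_le_power2)
  then show ?thesis
    using k \<open>real_of_int k = (cmod x)^2\<close> by (intro exI[of _ "nat k"]) (simp add: of_nat_nat)
qed

lemma OK_cmod_square_lt_imp_real:
  assumes "x \<in> OK d" "(cmod x)^2 < real_of_int d / 4"
  shows "cnj x = x"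
proof -
  obtain a b where x: "x = of_coords a b" using assms(1) by (auto simp: mem_OK_iff)
  have "b = 0"
  proof (rule ccontr)
    assume "b \<noteq> 0"
    then have "1 \<le> \<bar>real_of_int b\<bar>" by linarith
    then have "1 \<le> (real_of_int b)^2" using abs_le_square_iff[of 1 "real_of_int b"] by simp
    then have "Im \<omega> * Im \<omega> \<le> (real_of_int b)^2 * (Im \<omega> * Im \<omega>)"
      by (simp add: mult_le_cancel_right1)
    also have "\<dots> = (Im x)^2" by (simp add: x Im_of_coords power2_eq_square)
    also have "\<dots> \<le> (cmod x)^2" by (simp add: cmod_power2)
    finally show False using Im_omega_square_ge assms(2) by linarith
  qed
  then show ?thesis by (simp add: x of_coords_def)
qed

end


section \<open>Ideals of the ring of integers\<close>

definition scale_set :: "complex \<Rightarrow> complex set \<Rightarrow> complex set" where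
  "scale_set c I = (\<lambda>x. c * x) ` I"

lemma scale_set_scale_set: "scale_set a (scale_set b I) = scale_set (a * b) I"
  by (auto simp: scale_set_def image_image mult.assoc)

lemma scale_set_1 [simp]: "scale_set 1 I = I"
  by (simp add: scale_set_def)

lemma scale_set_cancel: "a \<noteq> 0 \<Longrightarrow> scale_set a I = scale_set a J \<Longrightarrow> I = J"
  unfolding scale_set_def by (simp add: inj_image_eq_iff inj_on_def)

lemma conj_ideal_scale_set: "conj_ideal (scale_set c I) = scale_set (cnj c) (conj_ideal I)"
  by (auto simp: conj_ideal_def scale_set_def image_image)

lemma conj_ideal_conj_ideal [simp]: "conj_ideal (conj_ideal I) = I"
  by (simp add: conj_ideal_def image_image)

lemma cnj_mem_conj_ideal_iff [simp]: "cnj x \<in> conj_ideal I \<longleftrightarrow> x \<in> I"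
  by (auto simp: conj_ideal_def)

lemma conj_ideal_mono: "I \<subseteq> J \<Longrightarrow> conj_ideal I \<subseteq> conj_ideal J"
  by (auto simp: conj_ideal_def)

context imag_quadratic
begin

lemma principal_ideal_eq_scale_set: "principal_ideal d a = scale_set a (OK d)"
  by (auto simp: principal_ideal_def scale_set_def mult.commute)

lemma mem_scale_set_OK_self: "a \<in> scale_set a (OK d)"
  unfolding scale_set_def using OK_1 by force

lemma is_idealI:
  assumes "I \<subseteq> OK d" "0 \<in> I" "\<And>x y. x \<in> I \<Longrightarrow> y \<in> I \<Longrightarrow> x + y \<in> I"
    and "\<And>r x. r \<in> OK d \<Longrightarrow> x \<in> I \<Longrightarrow> r * x \<in> I"
  shows "is_ideal d I"
  using assms by (simp add: is_ideal_def)

lemma is_ideal_subset: "is_ideal d I \<Longrightarrow> I \<subseteq> OK d"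
  by (simp add: is_ideal_def)

lemma is_ideal_zero: "is_ideal d I \<Longrightarrow> 0 \<in> I"
  by (simp add: is_ideal_def)

lemma is_ideal_add: "is_ideal d I \<Longrightarrow> x \<in> I \<Longrightarrow> y \<in> I \<Longrightarrow> x + y \<in> I"
  by (simp add: is_ideal_def)

lemma is_ideal_mult: "is_ideal d I \<Longrightarrow> r \<in> OK d \<Longrightarrow> x \<in> I \<Longrightarrow> r * x \<in> I"
  by (simp add: is_ideal_def)

lemma is_ideal_mult_right: "is_ideal d I \<Longrightarrow> r \<in> OK d \<Longrightarrow> x \<in> I \<Longrightarrow> x * r \<in> I"
  using is_ideal_mult[of I r x] by (simp add: mult.commute)

lemma is_ideal_diff: "is_ideal d I \<Longrightarrow> x \<in> I \<Longrightarrow> y \<in> I \<Longrightarrow> x - y \<in> I"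
  using is_ideal_add[of I x "-y"] is_ideal_mult[of I "-1" y] OK_of_int[of "-1"] by simp

lemma is_ideal_of_int_mult: "is_ideal d I \<Longrightarrow> x \<in> I \<Longrightarrow> of_int k * x \<in> I"
  by (simp add: is_ideal_mult)

lemma is_ideal_OK: "is_ideal d (OK d)"
  by (simp add: is_ideal_def OK_add OK_mult)

lemma is_ideal_colon:
  assumes "is_ideal d H" "z \<in> OK d"
  shows "is_ideal d {u \<in> OK d. u * z \<in> H}"
proof (rule is_idealI)
  show "0 \<in> {u \<in> OK d. u * z \<in> H}" using is_ideal_zero[OF assms(1)] by simp
  fix x y assume "x \<in> {u \<in> OK d. u * z \<in> H}" "y \<in> {u \<in> OK d. u * z \<in> H}"
  then show "x + y \<in> {u \<in> OK d. u * z \<in> H}"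
    using is_ideal_add[OF assms(1)] by (auto simp: distrib_right intro: OK_add)
next
  fix r x assume "r \<in> OK d" "x \<in> {u \<in> OK d. u * z \<in> H}"
  then show "r * x \<in> {u \<in> OK d. u * z \<in> H}"
    using is_ideal_mult[OF assms(1)] by (auto simp: mult.assoc intro: OK_mult)
qed auto

lemma is_ideal_scale_set:
  assumes "is_ideal d H" "scale_set c H \<subseteq> OK d"
  shows "is_ideal d (scale_set c H)"
proof (rule is_idealI[OF assms(2)])
  show "0 \<in> scale_set c H" using is_ideal_zero[OF assms(1)] unfolding scale_set_def by force
  fix x y assume "x \<in> scale_set c H" "y \<in> scale_set c H"
  then obtain x' y' where "x' \<in> H" "y' \<in> H" "x = c * x'" "y = c * y'"
    by (auto simp: scale_set_def)
  then have "x + y = c * (x' + y')" "x' + y' \<in> H"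
    using is_ideal_add[OF assms(1)] by (simp_all add: distrib_left)
  then show "x + y \<in> scale_set c H" unfolding scale_set_def by (metis imageI)
next
  fix r x assume "r \<in> OK d" "x \<in> scale_set c H"
  then obtain x' where "x' \<in> H" "x = c * x'" by (auto simp: scale_set_def)
  then have "r * x = c * (r * x')" "r * x' \<in> H"
    using is_ideal_mult[OF assms(1) \<open>r \<in> OK d\<close>] by simp_all
  then show "r * x \<in> scale_set c H" unfolding scale_set_def by (metis imageI)
qed

lemma scale_set_subset_OK: "I \<subseteq> OK d \<Longrightarrow> c \<in> OK d \<Longrightarrow> scale_set c I \<subseteq> OK d"
  by (auto simp: scale_set_def intro: OK_mult)

lemma conj_ideal_subset_OK: "I \<subseteq> OK d \<Longrightarrow> conj_ideal I \<subseteq> OK d"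
  by (auto simp: conj_ideal_def intro: OK_cnj)

lemma is_ideal_conj_ideal:
  assumes "is_ideal d I"
  shows "is_ideal d (conj_ideal I)"
proof (rule is_idealI)
  show "conj_ideal I \<subseteq> OK d"
    using is_ideal_subset[OF assms] by (rule conj_ideal_subset_OK)
  show "0 \<in> conj_ideal I"
    using is_ideal_zero[OF assms] cnj_mem_conj_ideal_iff[of 0] by simp
  fix x y assume "x \<in> conj_ideal I" "y \<in> conj_ideal I"
  then have "cnj (cnj x + cnj y) \<in> conj_ideal I"
    using is_ideal_add[OF assms] by (simp only: cnj_mem_conj_ideal_iff) (auto simp: conj_ideal_def)
  then show "x + y \<in> conj_ideal I" by simp
next
  fix r x assume "r \<in> OK d" "x \<in> conj_ideal I"
  then have "cnj (cnj r * cnj x) \<in> conj_ideal I"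
    using is_ideal_mult[OF assms] OK_cnj by (simp only: cnj_mem_conj_ideal_iff) (auto simp: conj_ideal_def)
  then show "r * x \<in> conj_ideal I" by simp
qed

lemma conj_ideal_OK: "conj_ideal (OK d) = OK d"
  using OK_cnj by (force simp: conj_ideal_def)

lemma mem_ideal_multI: "x \<in> I \<Longrightarrow> y \<in> J \<Longrightarrow> x * y \<in> ideal_mult d I J"
  unfolding ideal_mult_def by blast

lemma ideal_mult_least:
  assumes "is_ideal d H" "\<And>x y. x \<in> I \<Longrightarrow> y \<in> J \<Longrightarrow> x * y \<in> H"
  shows "ideal_mult d I J \<subseteq> H"
  unfolding ideal_mult_def using assms by blast

lemma is_ideal_ideal_mult:
  assumes "I \<subseteq> OK d" "J \<subseteq> OK d"
  shows "is_ideal d (ideal_mult d I J)"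
proof -
  have "OK d \<in> {H. is_ideal d H \<and> {x * y | x y. x \<in> I \<and> y \<in> J} \<subseteq> H}"
    using assms is_ideal_OK by (auto intro: OK_mult)
  then show ?thesis
    unfolding ideal_mult_def by (intro is_idealI) (auto simp: is_ideal_def)
qed

lemma ideal_mult_subset_OK: "I \<subseteq> OK d \<Longrightarrow> J \<subseteq> OK d \<Longrightarrow> ideal_mult d I J \<subseteq> OK d"
  using is_ideal_ideal_mult is_ideal_subset by blast

lemma ideal_mult_commute: "ideal_mult d I J = ideal_mult d J I"
proof -
  have "{x * y | x y. x \<in> I \<and> y \<in> J} = {x * y | x y. x \<in> J \<and> y \<in> I}"
    by (metis mult.commute)
  then show ?thesis unfolding ideal_mult_def by simp
qed

lemma ideal_mult_subset_left: "is_ideal d I \<Longrightarrow> J \<subseteq> OK d \<Longrightarrow> ideal_mult d I J \<subseteq> I"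
  by (intro ideal_mult_least) (auto intro: is_ideal_mult_right)

lemma ideal_mult_OK_left: "is_ideal d I \<Longrightarrow> ideal_mult d (OK d) I = I"
  using ideal_mult_subset_left[of I "OK d"] mem_ideal_multI[OF OK_1, of _ I]
  by (auto simp: ideal_mult_commute is_ideal_subset)

lemma ideal_mult_assoc_subset:
  assumes "I \<subseteq> OK d" "J \<subseteq> OK d" "K \<subseteq> OK d"
  shows "ideal_mult d (ideal_mult d I J) K \<subseteq> ideal_mult d I (ideal_mult d J K)"
proof (rule ideal_mult_least)
  let ?R = "ideal_mult d I (ideal_mult d J K)"
  show R: "is_ideal d ?R" using assms by (intro is_ideal_ideal_mult ideal_mult_subset_OK)
  fix u z assume u: "u \<in> ideal_mult d I J" and z: "z \<in> K"
  have "ideal_mult d I J \<subseteq> {u \<in> OK d. u * z \<in> ?R}"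
  proof (rule ideal_mult_least[OF is_ideal_colon[OF R]])
    show "z \<in> OK d" using z assms(3) by blast
    fix x y assume "x \<in> I" "y \<in> J"
    then show "x * y \<in> {u \<in> OK d. u * z \<in> ?R}"
      using z assms by (auto simp: mult.assoc intro: OK_mult mem_ideal_multI)
  qed
  then show "u * z \<in> ?R" using u by blast
qed

lemma ideal_mult_assoc:
  assumes "I \<subseteq> OK d" "J \<subseteq> OK d" "K \<subseteq> OK d"
  shows "ideal_mult d (ideal_mult d I J) K = ideal_mult d I (ideal_mult d J K)"
proof
  show "ideal_mult d (ideal_mult d I J) K \<subseteq> ideal_mult d I (ideal_mult d J K)"
    using assms by (rule ideal_mult_assoc_subset)
  have "ideal_mult d I (ideal_mult d J K) = ideal_mult d (ideal_mult d K J) I"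
    by (simp add: ideal_mult_commute)
  also have "\<dots> \<subseteq> ideal_mult d K (ideal_mult d J I)"
    using assms by (intro ideal_mult_assoc_subset)
  also have "\<dots> = ideal_mult d (ideal_mult d I J) K"
    by (simp add: ideal_mult_commute)
  finally show "ideal_mult d I (ideal_mult d J K) \<subseteq> ideal_mult d (ideal_mult d I J) K" .
qed

lemma ideal_mult_interchange:
  assumes "A \<subseteq> OK d" "B \<subseteq> OK d" "C \<subseteq> OK d" "D \<subseteq> OK d"
  shows "ideal_mult d (ideal_mult d A B) (ideal_mult d C D) =
         ideal_mult d (ideal_mult d A C) (ideal_mult d B D)"
proof -
  have "ideal_mult d (ideal_mult d A B) (ideal_mult d C D) =
        ideal_mult d A (ideal_mult d (ideal_mult d B C) D)"
    using assms by (simp add: ideal_mult_assoc ideal_mult_subset_OK)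
  also have "ideal_mult d B C = ideal_mult d C B"
    by (rule ideal_mult_commute)
  also have "ideal_mult d A (ideal_mult d (ideal_mult d C B) D) =
             ideal_mult d (ideal_mult d A C) (ideal_mult d B D)"
    using assms by (simp add: ideal_mult_assoc ideal_mult_subset_OK)
  finally show ?thesis .
qed

lemma ideal_mult_scale_set:
  assumes I: "I \<subseteq> OK d" and J: "J \<subseteq> OK d" and c: "c \<in> OK d"
  shows "ideal_mult d (scale_set c I) J = scale_set c (ideal_mult d I J)"
proof
  have "is_ideal d (scale_set c (ideal_mult d I J))"
    using assms by (intro is_ideal_scale_set is_ideal_ideal_mult scale_set_subset_OK ideal_mult_subset_OK)
  then show "ideal_mult d (scale_set c I) J \<subseteq> scale_set c (ideal_mult d I J)"
    by (rule ideal_mult_least) (auto simp: scale_set_def mult.assoc intro!: imageI mem_ideal_multI)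
  let ?H = "ideal_mult d (scale_set c I) J"
  have "ideal_mult d I J \<subseteq> {u \<in> OK d. u * c \<in> ?H}"
  proof (rule ideal_mult_least[OF is_ideal_colon[OF is_ideal_ideal_mult c]])
    show "scale_set c I \<subseteq> OK d" using I c by (rule scale_set_subset_OK)
    show "J \<subseteq> OK d" by (rule J)
    fix x y assume xy: "x \<in> I" "y \<in> J"
    have "(c * x) * y \<in> ?H" using xy by (intro mem_ideal_multI) (auto simp: scale_set_def)
    then show "x * y \<in> {u \<in> OK d. u * c \<in> ?H}"
      using xy I J by (auto simp: algebra_simps intro: OK_mult)
  qed
  then show "scale_set c (ideal_mult d I J) \<subseteq> ?H" by (auto simp: scale_set_def mult.commute)
qed

lemma ideal_mult_scale_set_OK:
  assumes "a \<in> OK d" "b \<in> OK d"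
  shows "ideal_mult d (scale_set a (OK d)) (scale_set b (OK d)) = scale_set (a * b) (OK d)"
proof -
  have "ideal_mult d (scale_set a (OK d)) (scale_set b (OK d)) =
        scale_set a (ideal_mult d (OK d) (scale_set b (OK d)))"
    using assms by (intro ideal_mult_scale_set scale_set_subset_OK) auto
  also have "ideal_mult d (OK d) (scale_set b (OK d)) = scale_set b (OK d)"
    using assms by (intro ideal_mult_OK_left is_ideal_scale_set is_ideal_OK scale_set_subset_OK) auto
  finally show ?thesis by (simp add: scale_set_scale_set)
qed

lemma conj_ideal_ideal_mult_subset:
  assumes "I \<subseteq> OK d" "J \<subseteq> OK d"
  shows "conj_ideal (ideal_mult d I J) \<subseteq> ideal_mult d (conj_ideal I) (conj_ideal J)"
proof -
  have "is_ideal d (conj_ideal (ideal_mult d (conj_ideal I) (conj_ideal J)))"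
    using assms by (intro is_ideal_conj_ideal is_ideal_ideal_mult conj_ideal_subset_OK)
  then have "ideal_mult d I J \<subseteq> conj_ideal (ideal_mult d (conj_ideal I) (conj_ideal J))"
  proof (rule ideal_mult_least)
    fix x y assume "x \<in> I" "y \<in> J"
    then have "cnj x * cnj y \<in> ideal_mult d (conj_ideal I) (conj_ideal J)"
      by (intro mem_ideal_multI) simp_all
    then show "x * y \<in> conj_ideal (ideal_mult d (conj_ideal I) (conj_ideal J))"
      using cnj_mem_conj_ideal_iff[of "cnj x * cnj y"] by simp
  qed
  then show ?thesis using conj_ideal_mono by (metis conj_ideal_conj_ideal)
qed

lemma conj_ideal_ideal_mult:
  assumes "I \<subseteq> OK d" "J \<subseteq> OK d"
  shows "conj_ideal (ideal_mult d I J) = ideal_mult d (conj_ideal I) (conj_ideal J)"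
proof
  show "conj_ideal (ideal_mult d I J) \<subseteq> ideal_mult d (conj_ideal I) (conj_ideal J)"
    using assms by (rule conj_ideal_ideal_mult_subset)
  have "conj_ideal I \<subseteq> OK d" "conj_ideal J \<subseteq> OK d"
    using assms by (simp_all add: conj_ideal_subset_OK)
  then have "conj_ideal (ideal_mult d (conj_ideal I) (conj_ideal J)) \<subseteq> ideal_mult d I J"
    using conj_ideal_ideal_mult_subset by (metis conj_ideal_conj_ideal)
  then show "ideal_mult d (conj_ideal I) (conj_ideal J) \<subseteq> conj_ideal (ideal_mult d I J)"
    using conj_ideal_mono by (metis conj_ideal_conj_ideal)
qed


section \<open>The class group\<close>

lemma ideal_equiv_iff_scale_set:
  "ideal_equiv d I J \<longleftrightarrow>
     (\<exists>\<alpha> \<beta>. \<alpha> \<in> OK d \<and> \<beta> \<in> OK d \<and> \<alpha> \<noteq> 0 \<and> \<beta> \<noteq> 0 \<and> scale_set \<alpha> I = scale_set \<beta> J)"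
  by (simp add: ideal_equiv_def scale_set_def)

lemma ideal_equiv_refl: "ideal_equiv d I I"
  unfolding ideal_equiv_iff_scale_set by (intro exI[of _ 1]) auto

lemma ideal_equiv_sym: "ideal_equiv d I J \<Longrightarrow> ideal_equiv d J I"
  unfolding ideal_equiv_iff_scale_set by metis

lemma ideal_equiv_trans:
  assumes "ideal_equiv d I J" "ideal_equiv d J K"
  shows "ideal_equiv d I K"
proof -
  obtain a b where ab: "a \<in> OK d" "b \<in> OK d" "a \<noteq> 0" "b \<noteq> 0" "scale_set a I = scale_set b J"
    using assms(1) unfolding ideal_equiv_iff_scale_set by blast
  obtain c e where ce: "c \<in> OK d" "e \<in> OK d" "c \<noteq> 0" "e \<noteq> 0" "scale_set c J = scale_set e K"
    using assms(2) unfolding ideal_equiv_iff_scale_set by blast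
  have "scale_set (c * a) I = scale_set c (scale_set a I)"
    by (simp add: scale_set_scale_set)
  also have "\<dots> = scale_set c (scale_set b J)"
    using ab by simp
  also have "\<dots> = scale_set b (scale_set c J)"
    by (simp add: scale_set_scale_set mult.commute)
  also have "\<dots> = scale_set b (scale_set e K)"
    using ce by simp
  finally show ?thesis
    unfolding ideal_equiv_iff_scale_set using ab ce
    by (intro exI[of _ "c * a"] exI[of _ "b * e"]) (auto intro: OK_mult simp: scale_set_scale_set)
qed

lemma ideal_equiv_scale_set: "c \<in> OK d \<Longrightarrow> c \<noteq> 0 \<Longrightarrow> ideal_equiv d (scale_set c I) I"
  unfolding ideal_equiv_iff_scale_set by (intro exI[of _ 1] exI[of _ c]) auto

lemma ideal_equiv_ideal_mult_left:
  assumes "ideal_equiv d I I'" "I \<subseteq> OK d" "I' \<subseteq> OK d" "J \<subseteq> OK d"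
  shows "ideal_equiv d (ideal_mult d I J) (ideal_mult d I' J)"
proof -
  obtain a b where "a \<in> OK d" "b \<in> OK d" "a \<noteq> 0" "b \<noteq> 0" "scale_set a I = scale_set b I'"
    using assms(1) unfolding ideal_equiv_iff_scale_set by blast
  moreover from this have "scale_set a (ideal_mult d I J) = scale_set b (ideal_mult d I' J)"
    using assms(2-4) by (metis ideal_mult_scale_set)
  ultimately show ?thesis unfolding ideal_equiv_iff_scale_set by blast
qed

lemma ideal_equiv_ideal_mult:
  assumes "ideal_equiv d I I'" "ideal_equiv d J J'"
    and "I \<subseteq> OK d" "I' \<subseteq> OK d" "J \<subseteq> OK d" "J' \<subseteq> OK d"
  shows "ideal_equiv d (ideal_mult d I J) (ideal_mult d I' J')"
  using ideal_equiv_ideal_mult_left[of I I' J] ideal_equiv_ideal_mult_left[of J J' I'] assms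
  by (metis ideal_equiv_trans ideal_mult_commute)

lemma nz_idealI: "is_ideal d I \<Longrightarrow> x \<in> I \<Longrightarrow> x \<noteq> 0 \<Longrightarrow> nz_ideal d I"
  unfolding nz_ideal_def by blast

lemma nz_idealE:
  assumes "nz_ideal d I"
  obtains x where "x \<in> I" "x \<noteq> 0"
  using assms is_ideal_zero unfolding nz_ideal_def by blast

lemma nz_ideal_is_ideal: "nz_ideal d I \<Longrightarrow> is_ideal d I"
  unfolding nz_ideal_def by blast

lemma nz_ideal_subset: "nz_ideal d I \<Longrightarrow> I \<subseteq> OK d"
  using nz_ideal_is_ideal is_ideal_subset by blast

lemma nz_ideal_OK: "nz_ideal d (OK d)"
  using nz_idealI[OF is_ideal_OK OK_1] by simp

lemma nz_ideal_conj_ideal: "nz_ideal d I \<Longrightarrow> nz_ideal d (conj_ideal I)"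
  by (metis nz_idealE nz_idealI nz_ideal_is_ideal is_ideal_conj_ideal
      cnj_mem_conj_ideal_iff complex_cnj_zero_iff)

lemma nz_ideal_ideal_mult:
  assumes "nz_ideal d I" "nz_ideal d J"
  shows "nz_ideal d (ideal_mult d I J)"
proof -
  obtain x y where "x \<in> I" "x \<noteq> 0" "y \<in> J" "y \<noteq> 0" using assms by (metis nz_idealE)
  then show ?thesis
    using nz_idealI[OF is_ideal_ideal_mult mem_ideal_multI[of x I y J]] nz_ideal_subset assms
    by simp
qed

lemma ideal_class_eq_iff:
  assumes "nz_ideal d I" "nz_ideal d J"
  shows "ideal_class d I = ideal_class d J \<longleftrightarrow> ideal_equiv d I J"
proof
  assume "ideal_class d I = ideal_class d J"
  moreover have "J \<in> ideal_class d J" using assms ideal_equiv_refl by (simp add: ideal_class_def)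
  ultimately have "J \<in> ideal_class d I" by simp
  then show "ideal_equiv d I J" by (simp add: ideal_class_def)
next
  assume "ideal_equiv d I J"
  then show "ideal_class d I = ideal_class d J"
    unfolding ideal_class_def using ideal_equiv_sym ideal_equiv_trans by blast
qed

lemma ideal_class_principal:
  assumes "nz_ideal d I" "c \<in> OK d" "c \<noteq> 0" "I = scale_set c (OK d)"
  shows "ideal_class d I = ideal_class d (OK d)"
  using assms ideal_equiv_scale_set ideal_class_eq_iff nz_ideal_OK by simp

lemma least_pos_int_mem_ideal:
  assumes "is_ideal d P" "of_int k \<in> P" "k > 0"
  obtains m where "m > 0" "of_int m \<in> P" "\<And>k. of_int k \<in> P \<Longrightarrow> m dvd k"
proof -
  define S where "S = {n::nat. n > 0 \<and> of_nat n \<in> P}"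
  have "nat k \<in> S" unfolding S_def using assms(2,3) by simp
  define m where "m = int (LEAST n. n \<in> S)"
  have "(LEAST n. n \<in> S) \<in> S" using \<open>nat k \<in> S\<close> by (rule LeastI)
  then have m: "m > 0" "of_int m \<in> P" unfolding m_def S_def by simp_all
  have "m dvd k" if "of_int k \<in> P" for k
  proof -
    have "of_int k - of_int (k div m) * of_int m \<in> P"
      using assms(1) that m(2) by (intro is_ideal_diff is_ideal_of_int_mult)
    then have "of_int (k mod m) \<in> P" by (simp add: minus_div_mult_eq_mod[symmetric])
    moreover have "nat (k mod m) \<notin> S"
    proof (rule not_less_Least)
      show "nat (k mod m) < (LEAST n. n \<in> S)" using m(1) by (simp add: m_def nat_less_iff)
    qed
    moreover have "0 \<le> k mod m" using m(1) by simp
    ultimately have "k mod m = 0" unfolding S_def by fastforce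
    then show ?thesis by presburger
  qed
  then show ?thesis using m that by blast
qed

lemma mem_scale_set_of_int_if_dvd_trace_norm:
  assumes "x \<in> OK d" "m > 0"
    and "x + cnj x = of_int k" "m dvd k" "x * cnj x = of_int n" "m^2 dvd n"
  shows "x \<in> scale_set (of_int m) (OK d)"
proof -
  obtain A B where x: "x = of_coords A B" using assms(1) by (auto simp: mem_OK_iff)
  have "of_int k = (of_int (2 * A + omega_trace d * B) :: complex)"
    using assms(3) add_cnj_of_coords[of A B] unfolding x by simp
  then have k: "k = 2 * A + omega_trace d * B" by (simp only: of_int_eq_iff)
  have "of_int n = (of_int (A * A + omega_trace d * A * B + omega_norm d * B * B) :: complex)"
    using assms(5) mult_cnj_of_coords[of A B] unfolding x by simp
  then have n: "n = A * A + omega_trace d * A * B + omega_norm d * B * B" by (simp only: of_int_eq_iff)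
  have "m dvd A \<and> m dvd B"
  proof (cases "d mod 4 = 3")
    case True
    then have t: "omega_trace d = 1" and n_omega: "omega_norm d = (1 + d) div 4"
      by (simp_all add: omega_trace_def omega_norm_def)
    show ?thesis
    proof (rule dvd_if_dvd_trace_norm_3_mod_4[OF squarefree_d True assms(2)])
      show "m dvd 2 * A + B" using assms(4) by (simp only: k t mult_1)
      show "m^2 dvd A * A + A * B + (1 + d) div 4 * B * B"
        using assms(6) by (simp only: n t n_omega mult_1)
    qed
  next
    case False
    then have t: "omega_trace d = 0" and n_omega: "omega_norm d = d"
      by (simp_all add: omega_trace_def omega_norm_def)
    show ?thesis
    proof (rule dvd_if_dvd_trace_norm_not_3_mod_4[OF squarefree_d False assms(2)])
      show "m dvd 2 * A" using assms(4) by (simp only: k t mult_zero_left add_0_right)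
      show "m^2 dvd A * A + d * B * B"
        using assms(6) by (simp only: n t n_omega mult_zero_left add_0_right)
    qed
  qed
  then obtain A' B' where "A = m * A'" "B = m * B'" by blast
  then have "x = of_int m * of_coords A' B'" by (simp add: x of_coords_def algebra_simps)
  then show ?thesis by (auto simp: scale_set_def)
qed

text \<open>Trace and norm of \<open>x y\<close> (\<open>x \<in> I\<close>, \<open>y \<in> I\<^sup>\<sigma>\<close>) are integers lying in \<open>I I\<^sup>\<sigma>\<close> itself.\<close>

lemma ideal_mult_conj_ideal_subset_scale_set:
  assumes I: "is_ideal d I" and "m > 0"
    and m_dvd: "\<And>k. of_int k \<in> ideal_mult d I (conj_ideal I) \<Longrightarrow> m dvd k"
  shows "ideal_mult d I (conj_ideal I) \<subseteq> scale_set (of_int m) (OK d)"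
proof (rule ideal_mult_least[OF is_ideal_scale_set[OF is_ideal_OK scale_set_subset_OK]])
  let ?P = "ideal_mult d I (conj_ideal I)"
  have IOK: "I \<subseteq> OK d" and cI: "conj_ideal I \<subseteq> OK d"
    using I is_ideal_subset conj_ideal_subset_OK by blast+
  have P: "is_ideal d ?P" using IOK cI by (rule is_ideal_ideal_mult)
  have norm_in_P: "x * cnj x \<in> ?P" if "x \<in> I" for x
    using that by (intro mem_ideal_multI) simp_all
  fix x y assume x: "x \<in> I" and y: "y \<in> conj_ideal I"
  have xy: "x * y \<in> OK d" using x y IOK cI by (blast intro: OK_mult)
  obtain k where k: "x * y + cnj (x * y) = of_int k" using OK_add_cnj_int[OF xy] by blast
  have cnj_y: "cnj y \<in> I" using y by (auto simp: conj_ideal_def)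
  have "cnj (x * y) = cnj y * cnj x" by simp
  moreover have "cnj y * cnj x \<in> ?P" using cnj_y x by (intro mem_ideal_multI) simp_all
  moreover have "x * y \<in> ?P" using x y by (rule mem_ideal_multI)
  ultimately have "m dvd k" using k m_dvd is_ideal_add[OF P] by (metis mult.commute)
  obtain a b where ab: "x * cnj x = of_nat a" "y * cnj y = of_nat b"
    using OK_mult_cnj_nat x y IOK cI by (meson subsetD)
  have "m dvd int a" "m dvd int b"
    using m_dvd norm_in_P[OF x] norm_in_P[OF cnj_y] ab by (auto simp: mult.commute)
  then have "m^2 dvd int a * int b" by (simp add: power2_eq_square mult_dvd_mono)
  moreover have "x * y * cnj (x * y) = of_int (int a * int b)" using ab by (simp add: ac_simps)
  ultimately show "x * y \<in> scale_set (of_int m) (OK d)"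
    using mem_scale_set_of_int_if_dvd_trace_norm[OF xy \<open>m > 0\<close> k \<open>m dvd k\<close>] by blast
qed simp_all

lemma ideal_mult_conj_ideal_eq_scale_set:
  assumes "nz_ideal d I"
  obtains m :: int where "m > 0" "ideal_mult d I (conj_ideal I) = scale_set (of_int m) (OK d)"
proof -
  define P where "P = ideal_mult d I (conj_ideal I)"
  have I: "is_ideal d I" "I \<subseteq> OK d" using assms nz_ideal_is_ideal nz_ideal_subset by auto
  have P: "is_ideal d P" unfolding P_def using I(2) conj_ideal_subset_OK[OF I(2)] by (rule is_ideal_ideal_mult)
  obtain x0 where x0: "x0 \<in> I" "x0 \<noteq> 0" using assms by (rule nz_idealE)
  obtain n0 where n0: "x0 * cnj x0 = of_nat n0" "(cmod x0)^2 = real n0"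
    using OK_mult_cnj_nat x0 I(2) by blast
  have "n0 > 0" using x0(2) n0(2) by (metis of_nat_0_less_iff zero_less_norm_iff zero_less_power)
  moreover have "x0 * cnj x0 \<in> P" unfolding P_def using x0(1) by (intro mem_ideal_multI) simp_all
  ultimately obtain m where m: "m > 0" "of_int m \<in> P" and m_dvd: "\<And>k. of_int k \<in> P \<Longrightarrow> m dvd k"
    using least_pos_int_mem_ideal[OF P, of "int n0"] n0(1) by auto
  have "P \<subseteq> scale_set (of_int m) (OK d)"
    unfolding P_def using ideal_mult_conj_ideal_subset_scale_set[OF I(1) m(1)] m_dvd P_def by blast
  moreover have "scale_set (of_int m) (OK d) \<subseteq> P"
    using is_ideal_mult_right[OF P _ m(2)] by (auto simp: scale_set_def)
  ultimately show ?thesis using m(1) that unfolding P_def by blast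
qed

abbreviation "Cl \<equiv> class_group d"

lemma carrier_class_group: "carrier Cl = ideal_class d ` {I. nz_ideal d I}"
  by (simp add: class_group_def)

lemma one_class_group: "\<one>\<^bsub>Cl\<^esub> = ideal_class d (OK d)"
  by (simp add: class_group_def)

lemma ideal_class_in_carrier: "nz_ideal d I \<Longrightarrow> ideal_class d I \<in> carrier Cl"
  by (simp add: carrier_class_group)

lemma carrier_class_groupE:
  assumes "X \<in> carrier Cl"
  obtains I where "nz_ideal d I" "X = ideal_class d I"
  using assms carrier_class_group by auto

lemma some_mem_ideal_class:
  assumes "nz_ideal d I"
  shows "nz_ideal d (SOME K. K \<in> ideal_class d I) \<and> ideal_equiv d I (SOME K. K \<in> ideal_class d I)"
proof -
  have "I \<in> ideal_class d I" using assms ideal_equiv_refl by (simp add: ideal_class_def)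
  then have "(SOME K. K \<in> ideal_class d I) \<in> ideal_class d I" by (rule someI)
  then show ?thesis by (simp add: ideal_class_def)
qed

lemma mult_ideal_class:
  assumes I: "nz_ideal d I" and J: "nz_ideal d J"
  shows "ideal_class d I \<otimes>\<^bsub>Cl\<^esub> ideal_class d J = ideal_class d (ideal_mult d I J)"
proof -
  define I0 where "I0 = (SOME K. K \<in> ideal_class d I)"
  define J0 where "J0 = (SOME K. K \<in> ideal_class d J)"
  have I0: "nz_ideal d I0" "ideal_equiv d I I0" using some_mem_ideal_class[OF I] unfolding I0_def by auto
  have J0: "nz_ideal d J0" "ideal_equiv d J J0" using some_mem_ideal_class[OF J] unfolding J0_def by auto
  have "ideal_equiv d (ideal_mult d I0 J0) (ideal_mult d I J)"
    using ideal_equiv_ideal_mult[OF ideal_equiv_sym[OF I0(2)] ideal_equiv_sym[OF J0(2)]]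
      I0(1) J0(1) I J nz_ideal_subset by blast
  then have "ideal_class d (ideal_mult d I0 J0) = ideal_class d (ideal_mult d I J)"
    using ideal_class_eq_iff nz_ideal_ideal_mult I0(1) J0(1) I J by blast
  then show ?thesis unfolding I0_def J0_def by (simp add: class_group_def)
qed

lemma ideal_class_mult_conj_ideal:
  assumes "nz_ideal d I"
  shows "ideal_class d (conj_ideal I) \<otimes>\<^bsub>Cl\<^esub> ideal_class d I = \<one>\<^bsub>Cl\<^esub>"
proof -
  obtain m :: int where m: "m > 0" "ideal_mult d I (conj_ideal I) = scale_set (of_int m) (OK d)"
    using assms by (rule ideal_mult_conj_ideal_eq_scale_set)
  have "nz_ideal d (ideal_mult d I (conj_ideal I))"
    using assms by (intro nz_ideal_ideal_mult nz_ideal_conj_ideal)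
  then have "ideal_class d (ideal_mult d I (conj_ideal I)) = \<one>\<^bsub>Cl\<^esub>"
    using ideal_class_principal[OF _ OK_of_int] m by (simp add: one_class_group)
  then show ?thesis
    using mult_ideal_class[OF nz_ideal_conj_ideal[OF assms] assms] by (simp add: ideal_mult_commute)
qed

lemma comm_group_class_group: "comm_group Cl"
proof (rule comm_groupI)
  show "\<one>\<^bsub>Cl\<^esub> \<in> carrier Cl" using one_class_group ideal_class_in_carrier nz_ideal_OK by simp
next
  fix X Y assume "X \<in> carrier Cl" "Y \<in> carrier Cl"
  then show "X \<otimes>\<^bsub>Cl\<^esub> Y \<in> carrier Cl"
    by (metis carrier_class_groupE mult_ideal_class ideal_class_in_carrier nz_ideal_ideal_mult)
next
  fix X Y Z assume "X \<in> carrier Cl" "Y \<in> carrier Cl" "Z \<in> carrier Cl"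
  then obtain I J K where "nz_ideal d I" "nz_ideal d J" "nz_ideal d K"
    and "X = ideal_class d I" "Y = ideal_class d J" "Z = ideal_class d K"
    by (metis carrier_class_groupE)
  then show "X \<otimes>\<^bsub>Cl\<^esub> Y \<otimes>\<^bsub>Cl\<^esub> Z = X \<otimes>\<^bsub>Cl\<^esub> (Y \<otimes>\<^bsub>Cl\<^esub> Z)"
    by (simp add: mult_ideal_class nz_ideal_ideal_mult ideal_mult_assoc nz_ideal_subset)
next
  fix X Y assume "X \<in> carrier Cl" "Y \<in> carrier Cl"
  then show "X \<otimes>\<^bsub>Cl\<^esub> Y = Y \<otimes>\<^bsub>Cl\<^esub> X"
    by (metis carrier_class_groupE mult_ideal_class ideal_mult_commute)
next
  fix X assume "X \<in> carrier Cl"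
  then obtain I where I: "nz_ideal d I" "X = ideal_class d I" by (rule carrier_class_groupE)
  then show "\<one>\<^bsub>Cl\<^esub> \<otimes>\<^bsub>Cl\<^esub> X = X"
    using mult_ideal_class[OF nz_ideal_OK I(1)] ideal_mult_OK_left nz_ideal_is_ideal
    by (simp add: one_class_group)
  show "\<exists>Y\<in>carrier Cl. Y \<otimes>\<^bsub>Cl\<^esub> X = \<one>\<^bsub>Cl\<^esub>"
    using I ideal_class_mult_conj_ideal ideal_class_in_carrier nz_ideal_conj_ideal by blast
qed

lemma inv_ideal_class:
  assumes "nz_ideal d I"
  shows "inv\<^bsub>Cl\<^esub> ideal_class d I = ideal_class d (conj_ideal I)"
  using comm_group.axioms(2)[OF comm_group_class_group] assms
  by (metis group.inv_equality ideal_class_mult_conj_ideal ideal_class_in_carrier nz_ideal_conj_ideal)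


section \<open>Finiteness of the class group\<close>

definition approx_bound :: nat where
  "approx_bound = nat \<lceil>2 * Im \<omega>\<rceil> + 1"

lemma approx_bound_pos: "approx_bound > 0"
  by (simp add: approx_bound_def)

lemma Im_omega_div_approx_bound: "Im \<omega> / real approx_bound < 1 / 2"
proof -
  have "2 * Im \<omega> < real approx_bound" unfolding approx_bound_def by linarith
  then show ?thesis using approx_bound_pos by (simp add: field_simps)
qed

lemma exists_multiple_near_OK:
  obtains t :: nat and r where "0 < t" "t \<le> approx_bound" "r \<in> OK d" "cmod (of_nat t * z - r) < 1"
proof -
  obtain h k where hk: "0 < k" "k \<le> int approx_bound"
    "\<bar>of_int k * (Im z / Im \<omega>) - of_int h\<bar> < 1 / approx_bound"
    using Dirichlet_approx[OF approx_bound_pos] by blast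
  define u where "u = of_int k * z - of_int h * \<omega>"
  have "\<bar>Im u\<bar> = \<bar>of_int k * (Im z / Im \<omega>) - of_int h\<bar> * Im \<omega>"
    unfolding u_def using Im_omega_pos by (simp add: abs_mult field_simps)
  also have "\<dots> < 1 / approx_bound * Im \<omega>"
    using hk(3) Im_omega_pos by (intro mult_strict_right_mono)
  finally have "\<bar>Im u\<bar> < Im \<omega> / approx_bound" by simp
  then have Im_u: "\<bar>Im u\<bar> < 1 / 2" using Im_omega_div_approx_bound by linarith
  define a where "a = \<lfloor>Re u + 1 / 2\<rfloor>"
  have Re_u: "\<bar>Re u - of_int a\<bar> \<le> 1 / 2" unfolding a_def by linarith
  have "(cmod (u - of_int a))^2 = (Re u - of_int a)^2 + (Im u)^2" by (simp add: cmod_power2)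
  also have "\<dots> < 1"
  proof -
    have "(Re u - of_int a)^2 \<le> (1 / 2)^2" using Re_u by (simp add: power2_le_iff_abs_le)
    moreover have "(Im u)^2 < (1 / 2)^2" using Im_u abs_le_square_iff[of "1 / 2" "Im u"] by auto
    ultimately show ?thesis by (simp add: power2_eq_square)
  qed
  finally have "cmod (u - of_int a) < 1" by (simp add: power_less_one_iff abs_square_less_1)
  moreover have "u - of_int a = of_nat (nat k) * z - of_coords a h"
    using hk(1) by (simp add: u_def of_coords_def)
  ultimately show ?thesis using hk(1,2) that[of "nat k" "of_coords a h"] by simp
qed

lemma ideal_exists_min_norm:
  assumes "nz_ideal d I"
  obtains \<alpha> where "\<alpha> \<in> I" "\<alpha> \<noteq> 0" "\<And>x. x \<in> I \<Longrightarrow> x \<noteq> 0 \<Longrightarrow> cmod \<alpha> \<le> cmod x"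
proof -
  define E where "E n \<longleftrightarrow> (\<exists>x\<in>I. x \<noteq> 0 \<and> (cmod x)^2 = real n)" for n
  have norm_nat: "\<exists>n. (cmod x)^2 = real n" if "x \<in> I" for x
    using OK_mult_cnj_nat that nz_ideal_subset[OF assms] by blast
  obtain x0 where "x0 \<in> I" "x0 \<noteq> 0" using assms by (rule nz_idealE)
  then have "\<exists>n. E n" unfolding E_def using norm_nat by blast
  then have "E (LEAST n. E n)" by (rule LeastI_ex)
  then obtain \<alpha> where \<alpha>: "\<alpha> \<in> I" "\<alpha> \<noteq> 0" "(cmod \<alpha>)^2 = real (LEAST n. E n)"
    unfolding E_def by blast
  have "cmod \<alpha> \<le> cmod x" if x: "x \<in> I" "x \<noteq> 0" for x
  proof -
    obtain n where n: "(cmod x)^2 = real n" using norm_nat[OF x(1)] by blast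
    then have "(LEAST n. E n) \<le> n" using x unfolding E_def by (blast intro: Least_le)
    then have "(cmod \<alpha>)^2 \<le> (cmod x)^2" using \<alpha>(3) n by simp
    then show ?thesis by (simp add: power2_le_iff_abs_le)
  qed
  then show ?thesis by (rule that[OF \<alpha>(1,2)])
qed

text \<open>For some \<open>0 < t \<le> approx_bound\<close>, \<open>t x / \<alpha>\<close> lies within distance 1 of \<open>O_K\<close>; the
  remainder \<open>t x - r \<alpha> \<in> I\<close> is then shorter than \<open>\<alpha>\<close>, hence zero.\<close>

lemma fact_mult_mem_scale_set_min_norm:
  assumes I: "is_ideal d I" and \<alpha>: "\<alpha> \<in> I" "\<alpha> \<noteq> 0"
    and min: "\<And>x. x \<in> I \<Longrightarrow> x \<noteq> 0 \<Longrightarrow> cmod \<alpha> \<le> cmod x" and x: "x \<in> I"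
  shows "of_nat (fact approx_bound) * x \<in> scale_set \<alpha> (OK d)"
proof -
  obtain t r where tr: "0 < t" "t \<le> approx_bound" "r \<in> OK d" "cmod (of_nat t * (x / \<alpha>) - r) < 1"
    using exists_multiple_near_OK .
  define v where "v = of_nat t * x - r * \<alpha>"
  have "v \<in> I" unfolding v_def using is_ideal_diff[OF I is_ideal_mult[OF I OK_of_nat x] is_ideal_mult_right[OF I tr(3) \<alpha>(1)]]
    by (simp add: mult.commute)
  have "v = \<alpha> * (of_nat t * (x / \<alpha>) - r)" unfolding v_def using \<alpha>(2) by (simp add: field_simps)
  then have "cmod v < cmod \<alpha>" using tr(4) \<alpha>(2) by (simp add: norm_mult)
  then have "v = 0" using min[OF \<open>v \<in> I\<close>] by linarith
  then have tx: "of_nat t * x = \<alpha> * r" unfolding v_def by simp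
  have "t dvd fact approx_bound" using tr(1,2) by (simp add: dvd_fact)
  then obtain q where "fact approx_bound = t * q" by blast
  then have "of_nat (fact approx_bound) * x = \<alpha> * (of_nat q * r)" using tx by (simp add: ac_simps)
  moreover have "of_nat q * r \<in> OK d" using tr(3) by (simp add: OK_mult)
  ultimately show ?thesis unfolding scale_set_def by blast
qed

lemma ideal_equiv_ideal_containing_fact:
  assumes "nz_ideal d I"
  obtains K where "is_ideal d K" "of_nat (fact approx_bound) \<in> K" "ideal_equiv d I K"
proof -
  have I: "is_ideal d I" using assms by (rule nz_ideal_is_ideal)
  obtain \<alpha> where \<alpha>: "\<alpha> \<in> I" "\<alpha> \<noteq> 0" and min: "\<And>x. x \<in> I \<Longrightarrow> x \<noteq> 0 \<Longrightarrow> cmod \<alpha> \<le> cmod x"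
    using ideal_exists_min_norm[OF assms] by blast
  define h :: complex where "h = of_nat (fact approx_bound)"
  define K where "K = scale_set (h / \<alpha>) I"
  have "K \<subseteq> OK d"
  proof
    fix y assume "y \<in> K"
    then obtain x where "x \<in> I" "y = h / \<alpha> * x" unfolding K_def scale_set_def by blast
    moreover obtain r where "r \<in> OK d" "h * x = \<alpha> * r"
      using fact_mult_mem_scale_set_min_norm[OF I \<alpha> min \<open>x \<in> I\<close>] unfolding h_def scale_set_def by blast
    ultimately show "y \<in> OK d" using \<alpha>(2) by simp
  qed
  then have "is_ideal d K" using I unfolding K_def by (rule is_ideal_scale_set[rotated])
  moreover have "h \<in> K" unfolding K_def scale_set_def using \<alpha> by force
  moreover have "ideal_equiv d I K"
  proof -
    have "scale_set \<alpha> K = scale_set h I" unfolding K_def using \<alpha>(2) by (simp add: scale_set_scale_set)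
    moreover have "h \<in> OK d" "h \<noteq> 0" "\<alpha> \<in> OK d"
      using \<alpha>(1) is_ideal_subset[OF I] by (auto simp: h_def simp del: of_nat_fact)
    ultimately show ?thesis unfolding ideal_equiv_iff_scale_set using \<alpha>(2) by metis
  qed
  ultimately show ?thesis using that unfolding h_def by blast
qed

lemma of_coords_mem_ideal_iff_mod:
  assumes K: "is_ideal d K" "of_int H \<in> K"
  shows "of_coords a b \<in> K \<longleftrightarrow> of_coords (a mod H) (b mod H) \<in> K"
proof -
  let ?q = "of_int H * of_coords (a div H) (b div H)"
  have "of_coords (u + H * x) (v + H * y) = of_coords u v + of_int H * of_coords x y" for u v x y
    by (simp add: of_coords_def algebra_simps)
  from this[of "a mod H" "a div H" "b mod H" "b div H"]
  have eq: "of_coords a b = of_coords (a mod H) (b mod H) + ?q" by simp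
  have q: "?q \<in> K" using is_ideal_mult_right[OF K(1) of_coords_in_OK K(2)] .
  show ?thesis
  proof
    assume "of_coords a b \<in> K"
    then show "of_coords (a mod H) (b mod H) \<in> K" using is_ideal_diff[OF K(1) _ q] eq by fastforce
  qed (use is_ideal_add[OF K(1) _ q] eq in simp)
qed

lemma finite_ideals_containing:
  assumes "H > 0"
  shows "finite {K. is_ideal d K \<and> of_int H \<in> K}"
proof -
  define B where "B = (\<lambda>(a, b). of_coords a b) ` ({0..<H} \<times> {0..<H})"
  define F where "F S = {of_coords a b | a b. of_coords (a mod H) (b mod H) \<in> S}" for S
  have "K = F (K \<inter> B)" if K: "is_ideal d K" "of_int H \<in> K" for K
  proof (intro equalityI subsetI)
    fix x assume "x \<in> K"
    then obtain a b where x: "x = of_coords a b"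
      using is_ideal_subset[OF K(1)] mem_OK_iff by blast
    have "of_coords (a mod H) (b mod H) \<in> B"
      unfolding B_def using assms by (intro image_eqI[of _ _ "(a mod H, b mod H)"]) auto
    then show "x \<in> F (K \<inter> B)"
      using \<open>x \<in> K\<close> of_coords_mem_ideal_iff_mod[OF K] unfolding F_def x by blast
  next
    fix x assume "x \<in> F (K \<inter> B)"
    then obtain a b where "x = of_coords a b" "of_coords (a mod H) (b mod H) \<in> K"
      unfolding F_def by blast
    then show "x \<in> K" using of_coords_mem_ideal_iff_mod[OF K] by simp
  qed
  then have "{K. is_ideal d K \<and> of_int H \<in> K} \<subseteq> F ` Pow B" by blast
  moreover have "finite B" unfolding B_def by simp
  ultimately show ?thesis by (meson finite_Pow_iff finite_imageI finite_subset)
qed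

lemma finite_class_group: "finite (carrier Cl)"
proof -
  define H where "H = int (fact approx_bound)"
  have "carrier Cl \<subseteq> ideal_class d ` {K. is_ideal d K \<and> of_int H \<in> K}"
  proof
    fix X assume "X \<in> carrier Cl"
    then obtain I where I: "nz_ideal d I" "X = ideal_class d I" by (rule carrier_class_groupE)
    obtain K where K: "is_ideal d K" "of_int H \<in> K" "ideal_equiv d I K"
      using ideal_equiv_ideal_containing_fact[OF I(1)] unfolding H_def by auto
    then have "nz_ideal d K" using nz_idealI by (simp add: H_def)
    then have "X = ideal_class d K" using ideal_class_eq_iff I K by blast
    then show "X \<in> ideal_class d ` {K. is_ideal d K \<and> of_int H \<in> K}" using K by blast
  qed
  moreover have "H > 0" by (simp add: H_def)
  ultimately show ?thesis using finite_ideals_containing finite_subset by blast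
qed


section \<open>Split primes and the torsion subgroup\<close>

definition ideal_power :: "complex set \<Rightarrow> nat \<Rightarrow> complex set" where
  "ideal_power I n = (ideal_mult d I ^^ n) (OK d)"

lemma ideal_power_0 [simp]: "ideal_power I 0 = OK d"
  by (simp add: ideal_power_def)

lemma ideal_power_Suc: "ideal_power I (Suc n) = ideal_mult d I (ideal_power I n)"
  by (simp add: ideal_power_def)

lemma ideal_power_subset_OK: "I \<subseteq> OK d \<Longrightarrow> ideal_power I n \<subseteq> OK d"
  by (induction n) (simp_all add: ideal_power_Suc ideal_mult_subset_OK)

lemma nz_ideal_ideal_power: "nz_ideal d I \<Longrightarrow> nz_ideal d (ideal_power I n)"
  by (induction n) (auto simp: ideal_power_Suc nz_ideal_OK intro: nz_ideal_ideal_mult)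

lemma ideal_power_ideal_mult:
  assumes "I \<subseteq> OK d" "J \<subseteq> OK d"
  shows "ideal_power (ideal_mult d I J) n = ideal_mult d (ideal_power I n) (ideal_power J n)"
proof (induction n)
  case 0
  show ?case using ideal_mult_OK_left[OF is_ideal_OK] by simp
next
  case (Suc n)
  then show ?case
    using ideal_mult_interchange[OF assms ideal_power_subset_OK[OF assms(1)] ideal_power_subset_OK[OF assms(2)]]
    by (simp add: ideal_power_Suc)
qed

lemma conj_ideal_ideal_power: "I \<subseteq> OK d \<Longrightarrow> conj_ideal (ideal_power I n) = ideal_power (conj_ideal I) n"
  by (induction n) (simp_all add: conj_ideal_OK ideal_power_Suc conj_ideal_ideal_mult ideal_power_subset_OK)

lemma ideal_power_scale_set_OK: "a \<in> OK d \<Longrightarrow> ideal_power (scale_set a (OK d)) n = scale_set (a ^ n) (OK d)"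
proof (induction n)
  case (Suc n)
  have "a ^ n \<in> OK d" using Suc.prems by (induction n) (auto intro: OK_mult)
  then show ?case
    using Suc ideal_mult_scale_set_OK[OF Suc.prems] by (simp add: ideal_power_Suc)
qed simp

lemma ideal_power_subset: "is_ideal d I \<Longrightarrow> n > 0 \<Longrightarrow> ideal_power I n \<subseteq> I"
  by (cases n) (simp_all add: ideal_power_Suc ideal_mult_subset_left ideal_power_subset_OK is_ideal_subset)

lemma ideal_class_power:
  assumes "nz_ideal d I"
  shows "ideal_class d I [^]\<^bsub>Cl\<^esub> n = ideal_class d (ideal_power I n)"
proof (induction n)
  case (Suc n)
  then show ?case
    using mult_ideal_class[OF nz_ideal_ideal_power[OF assms] assms]
    by (simp add: ideal_power_Suc ideal_mult_commute)
qed (simp add: one_class_group)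

lemma ideal_class_power_eq_one_imp_principal:
  assumes "nz_ideal d J" "ideal_class d J [^]\<^bsub>Cl\<^esub> n = \<one>\<^bsub>Cl\<^esub>"
  obtains \<gamma> where "\<gamma> \<in> OK d" "ideal_power J n = scale_set \<gamma> (OK d)"
proof -
  have "ideal_equiv d (ideal_power J n) (OK d)"
    using assms ideal_class_eq_iff[OF nz_ideal_ideal_power nz_ideal_OK]
    by (simp add: ideal_class_power one_class_group)
  then obtain \<alpha> \<beta> where \<alpha>\<beta>: "\<alpha> \<in> OK d" "\<alpha> \<noteq> 0" "scale_set \<alpha> (ideal_power J n) = scale_set \<beta> (OK d)"
    unfolding ideal_equiv_iff_scale_set by blast
  then obtain \<gamma> where \<gamma>: "\<gamma> \<in> ideal_power J n" "\<beta> = \<alpha> * \<gamma>"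
    using mem_scale_set_OK_self[of \<beta>] by (auto simp: scale_set_def)
  then have "scale_set \<alpha> (ideal_power J n) = scale_set \<alpha> (scale_set \<gamma> (OK d))"
    using \<alpha>\<beta>(3) by (simp add: scale_set_scale_set)
  then have "ideal_power J n = scale_set \<gamma> (OK d)" using scale_set_cancel \<alpha>\<beta>(2) by blast
  moreover have "\<gamma> \<in> OK d" using \<gamma>(1) ideal_power_subset_OK[OF nz_ideal_subset[OF assms(1)]] by blast
  ultimately show ?thesis using that by blast
qed

lemma prime_ideal_ideal_mult_subset:
  assumes "prime_ideal d P" "A \<subseteq> OK d" "B \<subseteq> OK d" "ideal_mult d A B \<subseteq> P"
  shows "A \<subseteq> P \<or> B \<subseteq> P"
  using assms mem_ideal_multI unfolding prime_ideal_def by blast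

lemma prime_ideal_ideal_power_subset:
  assumes "prime_ideal d P" "A \<subseteq> OK d" "ideal_power A n \<subseteq> P" "n > 0"
  shows "A \<subseteq> P"
  using assms(3,4)
proof (induction n)
  case (Suc n)
  then have "A \<subseteq> P \<or> ideal_power A n \<subseteq> P"
    using prime_ideal_ideal_mult_subset[OF assms(1,2) ideal_power_subset_OK[OF assms(2)]]
    by (simp add: ideal_power_Suc)
  moreover have "\<not> OK d \<subseteq> P" using assms(1) is_ideal_subset
    unfolding prime_ideal_def nz_ideal_def by blast
  ultimately show ?case using Suc.IH by (cases n) auto
qed simp

lemma of_nat_mem_if_ideal_mult_conj_ideal_eq:
  assumes "is_ideal d P" "ideal_mult d P (conj_ideal P) = principal_ideal d (of_nat p)"
  shows "of_nat p \<in> P"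
proof -
  have "of_nat p \<in> ideal_mult d P (conj_ideal P)"
    using assms(2) mem_scale_set_OK_self by (simp add: principal_ideal_eq_scale_set)
  moreover have "conj_ideal P \<subseteq> OK d" using is_ideal_subset[OF assms(1)] by (rule conj_ideal_subset_OK)
  ultimately show ?thesis using ideal_mult_subset_left[OF assms(1)] by blast
qed

lemma prime_ideal_contains_no_coprime_nats:
  assumes "prime_ideal d P" "of_nat a \<in> P" "of_nat b \<in> P" "coprime a b"
  shows False
proof -
  have P: "is_ideal d P" "P \<subseteq> OK d" "P \<noteq> OK d"
    using assms(1) is_ideal_subset unfolding prime_ideal_def nz_ideal_def by auto
  obtain u v :: int where "u * int a + v * int b = 1"
    using bezout_int[of "int a" "int b"] assms(4) by (metis coprime_int_iff gcd_int_int_eq coprime_iff_gcd_eq_1)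
  then have "(1::complex) = of_int u * of_nat a + of_int v * of_nat b"
    by (metis of_int_1 of_int_add of_int_mult of_int_of_nat_eq)
  also have "\<dots> \<in> P" using P(1) assms(2,3) by (intro is_ideal_add is_ideal_of_int_mult)
  finally have "1 \<in> P" .
  then have "OK d \<subseteq> P" using is_ideal_mult_right[OF P(1)] by fastforce
  then show False using P by blast
qed

lemma cmod_square_le_if_dvd_of_nat:
  assumes "r \<in> OK d" "of_nat n = \<gamma> * cnj \<gamma> * r" "n > 0"
  shows "(cmod \<gamma>)^2 \<le> real n"
proof -
  have \<gamma>: "\<gamma> * cnj \<gamma> = of_real ((cmod \<gamma>)^2)" by (simp only: complex_norm_square)
  have "\<gamma> \<noteq> 0" using assms(2,3) by auto
  then have pos: "(cmod \<gamma>)^2 > 0" by simp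
  have "r = of_real (real n / (cmod \<gamma>)^2)"
    using assms(2) \<gamma> pos by (simp add: field_simps)
  then obtain a where a: "r = of_int a" using OK_real_imp_int[OF assms(1)] by auto
  then have n: "real n = (cmod \<gamma>)^2 * of_int a"
    using assms(2) \<gamma> by (metis of_real_eq_iff of_real_mult of_real_of_int_eq of_real_of_nat_eq)
  then have "0 < (cmod \<gamma>)^2 * real_of_int a" using assms(3) by simp
  then have "a \<ge> 1" using pos by (simp add: zero_less_mult_iff)
  then show ?thesis using n pos by (simp add: mult_le_cancel_left1)
qed

lemma principal_power_generator_real:
  assumes J: "J \<subseteq> OK d" and JcJ: "ideal_mult d J (conj_ideal J) = scale_set (of_nat N) (OK d)"
    and "N > 0" "real (N ^ n) < real_of_int d / 4"
    and \<gamma>: "\<gamma> \<in> OK d" "ideal_power J n = scale_set \<gamma> (OK d)"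
  shows "cnj \<gamma> = \<gamma>"
proof -
  have "scale_set (of_nat (N ^ n)) (OK d) = ideal_power (ideal_mult d J (conj_ideal J)) n"
    using JcJ ideal_power_scale_set_OK[of "of_nat N" n] by simp
  also have "\<dots> = ideal_mult d (ideal_power J n) (conj_ideal (ideal_power J n))"
    using J by (simp add: ideal_power_ideal_mult conj_ideal_ideal_power conj_ideal_subset_OK)
  also have "\<dots> = scale_set (\<gamma> * cnj \<gamma>) (OK d)"
    using \<gamma> by (simp add: conj_ideal_scale_set conj_ideal_OK ideal_mult_scale_set_OK OK_cnj)
  finally obtain r where r: "r \<in> OK d" "of_nat (N ^ n) = \<gamma> * cnj \<gamma> * r"
    using mem_scale_set_OK_self[of "of_nat (N ^ n)"] by (auto simp: scale_set_def)
  have "(cmod \<gamma>)^2 \<le> real (N ^ n)"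
    using cmod_square_le_if_dvd_of_nat[OF r] \<open>N > 0\<close> by simp
  then show ?thesis using OK_cmod_square_lt_imp_real[OF \<gamma>(1)] assms(4) by linarith
qed

lemma ideal_mult_conj_ideal_quotient:
  assumes "Pa \<subseteq> OK d" "Pb \<subseteq> OK d"
    and "ideal_mult d Pa (conj_ideal Pa) = principal_ideal d (of_nat pa)"
    and "ideal_mult d Pb (conj_ideal Pb) = principal_ideal d (of_nat pb)"
  shows "ideal_mult d (ideal_mult d Pa (conj_ideal Pb)) (conj_ideal (ideal_mult d Pa (conj_ideal Pb))) =
         scale_set (of_nat (pa * pb)) (OK d)"
proof -
  have "conj_ideal (ideal_mult d Pa (conj_ideal Pb)) = ideal_mult d (conj_ideal Pa) Pb"
    using assms(1,2) by (simp add: conj_ideal_ideal_mult conj_ideal_subset_OK)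
  moreover have "ideal_mult d (ideal_mult d Pa (conj_ideal Pb)) (ideal_mult d (conj_ideal Pa) Pb) =
                 ideal_mult d (ideal_mult d Pa (conj_ideal Pa)) (ideal_mult d Pb (conj_ideal Pb))"
    using ideal_mult_interchange[of Pa "conj_ideal Pb" "conj_ideal Pa" Pb] assms(1,2)
    by (simp add: conj_ideal_subset_OK ideal_mult_commute[of "conj_ideal Pb" Pb])
  ultimately show ?thesis
    using assms(3,4) by (simp add: principal_ideal_eq_scale_set ideal_mult_scale_set_OK)
qed

lemma conj_ideal_ideal_mult_not_subset:
  assumes Pa: "prime_ideal d Pa" "Pa \<noteq> conj_ideal Pa"
      "ideal_mult d Pa (conj_ideal Pa) = principal_ideal d (of_nat pa)"
    and Pb: "is_ideal d Pb" "ideal_mult d Pb (conj_ideal Pb) = principal_ideal d (of_nat pb)"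
    and "coprime pa pb"
  shows "\<not> ideal_mult d (conj_ideal Pa) Pb \<subseteq> Pa"
proof
  assume "ideal_mult d (conj_ideal Pa) Pb \<subseteq> Pa"
  moreover have "Pa \<subseteq> OK d"
    using Pa(1) is_ideal_subset unfolding prime_ideal_def nz_ideal_def by blast
  ultimately have "conj_ideal Pa \<subseteq> Pa \<or> Pb \<subseteq> Pa"
    using prime_ideal_ideal_mult_subset[OF Pa(1)] Pb(1) is_ideal_subset conj_ideal_subset_OK by blast
  then show False
  proof
    assume "conj_ideal Pa \<subseteq> Pa"
    then show False using conj_ideal_mono[of "conj_ideal Pa" Pa] Pa(2) by auto
  next
    assume "Pb \<subseteq> Pa"
    then have "of_nat pb \<in> Pa" using of_nat_mem_if_ideal_mult_conj_ideal_eq[OF Pb] by blast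
    moreover have "of_nat pa \<in> Pa"
      using Pa(1) of_nat_mem_if_ideal_mult_conj_ideal_eq[OF _ Pa(3)]
      unfolding prime_ideal_def nz_ideal_def by blast
    ultimately show False using prime_ideal_contains_no_coprime_nats[OF Pa(1)] \<open>coprime pa pb\<close> by blast
  qed
qed

lemma ideal_class_power_quotient_ne_one:
  assumes "n > 0"
    and Pa: "prime_ideal d Pa" "Pa \<noteq> conj_ideal Pa"
      "ideal_mult d Pa (conj_ideal Pa) = principal_ideal d (of_nat pa)"
    and Pb: "prime_ideal d Pb" "ideal_mult d Pb (conj_ideal Pb) = principal_ideal d (of_nat pb)"
    and "coprime pa pb" "pa > 0" "pb > 0" "real ((pa * pb) ^ n) < real_of_int d / 4"
  shows "ideal_class d (ideal_mult d Pa (conj_ideal Pb)) [^]\<^bsub>Cl\<^esub> n \<noteq> \<one>\<^bsub>Cl\<^esub>"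
proof
  define J where "J = ideal_mult d Pa (conj_ideal Pb)"
  have nz: "nz_ideal d Pa" "nz_ideal d Pb" using Pa(1) Pb(1) by (simp_all add: prime_ideal_def)
  then have J: "nz_ideal d J" unfolding J_def by (intro nz_ideal_ideal_mult nz_ideal_conj_ideal)
  assume "ideal_class d (ideal_mult d Pa (conj_ideal Pb)) [^]\<^bsub>Cl\<^esub> n = \<one>\<^bsub>Cl\<^esub>"
  then obtain \<gamma> where \<gamma>: "\<gamma> \<in> OK d" "ideal_power J n = scale_set \<gamma> (OK d)"
    using ideal_class_power_eq_one_imp_principal J unfolding J_def by blast
  have "cnj \<gamma> = \<gamma>"
    using principal_power_generator_real[OF nz_ideal_subset[OF J] _ _ _ \<gamma>, where N = "pa * pb"] assms(8-10)
      ideal_mult_conj_ideal_quotient[OF nz_ideal_subset[OF nz(1)] nz_ideal_subset[OF nz(2)] Pa(3) Pb(2)]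
    unfolding J_def by simp
  then have "ideal_power (conj_ideal J) n = ideal_power J n"
    using \<gamma>(2) conj_ideal_ideal_power[OF nz_ideal_subset[OF J]]
    by (metis conj_ideal_scale_set conj_ideal_OK)
  also have "\<dots> \<subseteq> Pa"
    using ideal_power_subset[OF nz_ideal_is_ideal[OF J] \<open>n > 0\<close>]
      ideal_mult_subset_left[OF nz_ideal_is_ideal[OF nz(1)] conj_ideal_subset_OK[OF nz_ideal_subset[OF nz(2)]]]
    unfolding J_def by blast
  finally have "conj_ideal J \<subseteq> Pa"
    using prime_ideal_ideal_power_subset[OF Pa(1) conj_ideal_subset_OK[OF nz_ideal_subset[OF J]] _ \<open>n > 0\<close>]
    by blast
  moreover have "conj_ideal J = ideal_mult d (conj_ideal Pa) Pb"
    unfolding J_def using nz by (simp add: conj_ideal_ideal_mult conj_ideal_subset_OK nz_ideal_subset)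
  ultimately show False
    using conj_ideal_ideal_mult_not_subset[OF Pa nz_ideal_is_ideal[OF nz(2)] Pb(2) \<open>coprime pa pb\<close>] by simp
qed

lemma rcos_torsion_ideal_class_neq:
  assumes "n > 0"
    and "prime_ideal d Pa" "Pa \<noteq> conj_ideal Pa"
      "ideal_mult d Pa (conj_ideal Pa) = principal_ideal d (of_nat pa)"
    and "prime_ideal d Pb" "ideal_mult d Pb (conj_ideal Pb) = principal_ideal d (of_nat pb)"
    and "coprime pa pb" "pa > 0" "pb > 0" "real ((pa * pb) ^ n) < real_of_int d / 4"
  shows "torsion d n #>\<^bsub>Cl\<^esub> ideal_class d Pa \<noteq> torsion d n #>\<^bsub>Cl\<^esub> ideal_class d Pb"
proof
  interpret comm_group Cl by (rule comm_group_class_group)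
  have H: "subgroup (torsion d n) Cl"
    unfolding torsion_def by (rule subgroup_nat_pow_eq_one)
  have nz: "nz_ideal d Pa" "nz_ideal d Pb" using assms(2,5) by (simp_all add: prime_ideal_def)
  assume "torsion d n #>\<^bsub>Cl\<^esub> ideal_class d Pa = torsion d n #>\<^bsub>Cl\<^esub> ideal_class d Pb"
  then have "ideal_class d Pa \<in> torsion d n #>\<^bsub>Cl\<^esub> ideal_class d Pb"
    using repr_independenceD[OF H] nz ideal_class_in_carrier by metis
  then have "ideal_class d Pa \<otimes>\<^bsub>Cl\<^esub> inv\<^bsub>Cl\<^esub> ideal_class d Pb \<in> torsion d n"
    using subgroup.rcos_module_imp[OF H is_group] nz ideal_class_in_carrier by blast
  then have "ideal_class d (ideal_mult d Pa (conj_ideal Pb)) [^]\<^bsub>Cl\<^esub> n = \<one>\<^bsub>Cl\<^esub>"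
    using nz by (simp add: torsion_def inv_ideal_class mult_ideal_class nz_ideal_conj_ideal)
  then show False using ideal_class_power_quotient_ne_one assms by blast
qed

end

theorem mainTheorem1:
  fixes d :: int and l M :: nat and p :: "nat \<Rightarrow> nat" and P :: "nat \<Rightarrow> complex set"
  assumes "d > 1" and "squarefree d"
    and "prime l" and "odd l"
    and "inj_on p {..<M}"
    and "\<And>j. j < M \<Longrightarrow> prime (p j)"
    and "\<And>j. j < M \<Longrightarrow> \<not> int (p j) dvd 2 * d"
    and "\<And>j. j < M \<Longrightarrow> real (p j) < real_of_int d powr (1 / (2 * real l)) / 4"
    and "\<And>j. j < M \<Longrightarrow> prime_ideal d (P j)"
    and "\<And>j. j < M \<Longrightarrow> P j \<noteq> conj_ideal (P j)"
    and "\<And>j. j < M \<Longrightarrow> ideal_mult d (P j) (conj_ideal (P j)) = principal_ideal d (of_nat (p j))"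
  shows "(\<forall>i<M. \<forall>j<M. i \<noteq> j \<longrightarrow>
            torsion d l #>\<^bsub>class_group d\<^esub> ideal_class d (P i)
            \<noteq> torsion d l #>\<^bsub>class_group d\<^esub> ideal_class d (P j))
       \<and> card (torsion d l) * M \<le> card (carrier (class_group d))"
proof -
  interpret imag_quadratic d using assms(1,2) by unfold_locales
  interpret comm_group "class_group d" by (rule comm_group_class_group)
  have "l > 0" using assms(3) prime_gt_0_nat by blast
  have distinct: "torsion d l #>\<^bsub>Cl\<^esub> ideal_class d (P i) \<noteq> torsion d l #>\<^bsub>Cl\<^esub> ideal_class d (P j)"
    if "i < M" "j < M" "i \<noteq> j" for i j
  proof (rule rcos_torsion_ideal_class_neq[OF \<open>l > 0\<close>])
    show "coprime (p i) (p j)"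
      using that assms(5,6) by (metis inj_onD lessThan_iff primes_coprime)
    show "real ((p i * p j) ^ l) < real_of_int d / 4"
      using that assms(1,8) \<open>l > 0\<close> by (intro power_mult_lt_quarter_if_lt_root)
  qed (use that assms(6,9-11) prime_gt_0_nat in auto)
  moreover have "card (torsion d l) * card {..<M} \<le> card (carrier Cl)"
  proof (rule card_subgroup_mult_le[OF finite_class_group])
    show "subgroup (torsion d l) Cl" unfolding torsion_def by (rule subgroup_nat_pow_eq_one)
    show "(\<lambda>j. ideal_class d (P j)) ` {..<M} \<subseteq> carrier Cl"
      using assms(9) by (auto simp: prime_ideal_def intro: ideal_class_in_carrier)
    show "inj_on (\<lambda>j. torsion d l #>\<^bsub>Cl\<^esub> ideal_class d (P j)) {..<M}"
      using distinct unfolding inj_on_def by blast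
  qed
  ultimately show ?thesis by auto
qed

end
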